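(* Let $\delta_W,\delta_X,\delta_Y,\delta_Z\in\mathbb{Z}$ with $\delta_W+\delta_X+\delta_Y+\delta_Z\ne 0$, and let $\ell=\max(|\delta_W|,|\delta_X|,|\delta_Y|,|\delta_Z|)$. Consider four tests $A,B,C,D$ (rows, in this order) and four persons $W,X,Y,Z$ (columns) and the $4\times 4$ schedule matrix $S$ defined as follows. Each person occupies exactly two tests: $X$ is in $A$ and $B$, $Y$ is in $B$ and $C$, $Z$ is in $C$ and $D$, $W$ is in $D$ and $A$; all other entries are $\infty$. For a person $P$ occupying the ordered pair of tests $(U,V)\in\{(A,B),(B,C),(C,D),(D,A)\}$ (for $P=X,Y,Z,W$ respectively), set $S_{U,P}=\max(0,-\delta_P)$ and $S_{V,P}=\max(0,\delta_P)$ (so that $S_{V,P}-S_{U,P}=\delta_P$). Then $S$ is a $(4,4,2)$-tropical code within maximum delay $\ell$.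
   Context: Tropical arithmetic on $\mathbb{R}\cup\{\infty\}$: $x\oplus y=\min(x,y)$, $x\odot y=x+y$, with $x\oplus\infty=x$ and $x\odot\infty=\infty$. For a matrix $S$ with $T$ rows and $N$ columns and a column vector $\mathbf{x}$ of length $N$, $S\odot\mathbf{x}$ is the vector whose $t$-th entry is $\min_{j}(S_{tj}+x_j)$. A $(T,N,D)$-tropical code is a matrix $S\in(\{0\}\cup\mathbb{N}\cup\{\infty\})^{T\times N}$ such that for any two distinct vectors $\mathbf{x},\mathbf{y}\in(\{0\}\cup\mathbb{N}\cup\{\infty\})^{N}$, each having at most $D$ finite entries, $S\odot\mathbf{x}\ne S\odot\mathbf{y}$. It is within maximum delay $\ell$ if $S\in\{0,1,\dots,\ell,\infty\}^{T\times N}$. *)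

theory Defs
  imports Main "HOL-Library.Extended_Nat"
begin

text \<open>Tropical arithmetic on {0} \<union> \<nat> \<union> {\<infinity>}, modelled by enat:
  tropical sum = min, tropical product = +, with \<infinity> absorbing for + and neutral for min.
  Matrices with T rows and N columns are functions nat \<Rightarrow> nat \<Rightarrow> enat, only the
  entries with row < T and column < N being relevant; vectors of length N are
  functions nat \<Rightarrow> enat, only entries j < N being relevant.\<close>

definition trop_mv :: "nat \<Rightarrow> (nat \<Rightarrow> nat \<Rightarrow> enat) \<Rightarrow> (nat \<Rightarrow> enat) \<Rightarrow> nat \<Rightarrow> enat" where
  "trop_mv N S x t = (INF j\<in>{..<N}. S t j + x j)"

definition finite_support_count :: "nat \<Rightarrow> (nat \<Rightarrow> enat) \<Rightarrow> nat" where
  "finite_support_count N x = card {j \<in> {..<N}. x j \<noteq> \<infinity>}"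

definition tropical_code :: "nat \<Rightarrow> nat \<Rightarrow> nat \<Rightarrow> (nat \<Rightarrow> nat \<Rightarrow> enat) \<Rightarrow> bool" where
  "tropical_code T N D S \<longleftrightarrow>
     (\<forall>x y. finite_support_count N x \<le> D \<longrightarrow> finite_support_count N y \<le> D \<longrightarrow>
        (\<exists>j<N. x j \<noteq> y j) \<longrightarrow> (\<exists>t<T. trop_mv N S x t \<noteq> trop_mv N S y t))"

definition within_delay :: "nat \<Rightarrow> nat \<Rightarrow> nat \<Rightarrow> (nat \<Rightarrow> nat \<Rightarrow> enat) \<Rightarrow> bool" where
  "within_delay T N l S \<longleftrightarrow> (\<forall>t<T. \<forall>j<N. S t j = \<infinity> \<or> S t j \<le> enat l)"

definition pospart :: "int \<Rightarrow> enat" where "pospart d = enat (nat (max 0 d))"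
definition negpart :: "int \<Rightarrow> enat" where "negpart d = enat (nat (max 0 (- d)))"

text \<open>Rows: A=0, B=1, C=2, D=3.  Columns: W=0, X=1, Y=2, Z=3.
  X occupies (A,B), Y occupies (B,C), Z occupies (C,D), W occupies (D,A).\<close>
definition sched :: "int \<Rightarrow> int \<Rightarrow> int \<Rightarrow> int \<Rightarrow> nat \<Rightarrow> nat \<Rightarrow> enat" where
  "sched dW dX dY dZ t j =
    (if j = 1 \<and> t = 0 then negpart dX else if j = 1 \<and> t = 1 then pospart dX
     else if j = 2 \<and> t = 1 then negpart dY else if j = 2 \<and> t = 2 then pospart dY
     else if j = 3 \<and> t = 2 then negpart dZ else if j = 3 \<and> t = 3 then pospart dZ
     else if j = 0 \<and> t = 3 then negpart dW else if j = 0 \<and> t = 0 then pospart dW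
     else \<infinity>)"

end

theory Submission
  imports Defs
begin

text \<open>Number the persons W, X, Y, Z and the tests A, B, C, D by 0, 1, 2, 3. They form a ring:
  test k is shared by person k, delayed by the positive part of its \<open>\<delta>\<close>, and person
  k + 1 (mod 4), delayed by the negative part of its \<open>\<delta>\<close>. If a neighbour of person p
  is absent in both x and y, the test they share reveals p's value. Otherwise, as at most two
  persons are present, x and y must occupy the two opposite pairs of the ring, so every test
  sees exactly one present person of each; going once around the ring these four equal
  readings telescope to \<open>\<delta>\<^sub>W + \<delta>\<^sub>X + \<delta>\<^sub>Y + \<delta>\<^sub>Z = 0\<close>.\<close>

definition ring_reading :: "(nat \<Rightarrow> int) \<Rightarrow> (nat \<Rightarrow> enat) \<Rightarrow> nat \<Rightarrow> enat" where
  "ring_reading d x k = min (pospart (d k) + x k) (negpart (d ((k + 1) mod 4)) + x ((k + 1) mod 4))"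

lemma trop_mv_4:
  "trop_mv 4 S x t = min (S t 0 + x 0) (min (S t 1 + x 1) (min (S t 2 + x 2) (S t 3 + x 3)))"
proof -
  have "{..<4::nat} = {0, 1, 2, 3}" by auto
  then show ?thesis unfolding trop_mv_def by (simp add: inf_min)
qed

lemma trop_mv_sched:
  assumes "d 0 = dW" "d 1 = dX" "d 2 = dY" "d 3 = dZ" and "k < 4"
  shows "trop_mv 4 (sched dW dX dY dZ) x k = ring_reading d x k"
proof -
  from assms(5) consider "k = 0" | "k = 1" | "k = 2" | "k = 3" by linarith
  then show ?thesis
    by cases (simp_all add: trop_mv_4 sched_def ring_reading_def min.commute flip: assms(1-4) numeral_2_eq_2)
qed

lemma infinity_among_three:
  assumes "finite_support_count 4 x \<le> 2" "i < 4" "j < 4" "k < 4" "i \<noteq> j" "j \<noteq> k" "i \<noteq> k"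
  shows "x i = \<infinity> \<or> x j = \<infinity> \<or> x k = \<infinity>"
proof (rule ccontr)
  assume "\<not> ?thesis"
  then have "{i, j, k} \<subseteq> {j \<in> {..<4}. x j \<noteq> \<infinity>}" using assms by auto
  then have "card {i, j, k} \<le> card {j \<in> {..<4::nat}. x j \<noteq> \<infinity>}" by (intro card_mono) auto
  moreover have "card {i, j, k} = 3" using assms by auto
  ultimately show False using assms(1) unfolding finite_support_count_def by simp
qed

lemma ring_reading_eq_infinity_iff:
  "ring_reading d x k = \<infinity> \<longleftrightarrow> x k = \<infinity> \<and> x ((k + 1) mod 4) = \<infinity>"
  by (cases "x k"; cases "x ((k + 1) mod 4)") (simp_all add: ring_reading_def pospart_def negpart_def)

lemma ring_reading_cancel_left:
  assumes "ring_reading d x k = ring_reading d y k"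
    and "x ((k + 1) mod 4) = \<infinity>" "y ((k + 1) mod 4) = \<infinity>"
  shows "x k = y k"
  using assms by (cases "x k"; cases "y k") (simp_all add: ring_reading_def pospart_def)

lemma ring_reading_cancel_right:
  assumes "ring_reading d x k = ring_reading d y k"
    and "x k = \<infinity>" "y k = \<infinity>"
  shows "x ((k + 1) mod 4) = y ((k + 1) mod 4)"
  using assms by (cases "x ((k + 1) mod 4)"; cases "y ((k + 1) mod 4)")
    (simp_all add: ring_reading_def negpart_def)

lemma pospart_negpart_split:
  obtains p n where "pospart d = enat p" "negpart d = enat n" "int p - int n = d"
  by (simp add: pospart_def negpart_def)

lemma alternating_readings_sum_eq_0:
  assumes "pospart d1 + enat u = negpart d2 + enat v"
    and "pospart d2 + enat v = negpart d3 + enat w"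
    and "pospart d3 + enat w = negpart d4 + enat z"
    and "pospart d4 + enat z = negpart d1 + enat u"
  shows "d1 + d2 + d3 + d4 = 0"
proof -
  obtain p1 n1 p2 n2 p3 n3 p4 n4 where
    "pospart d1 = enat p1" "negpart d1 = enat n1" "int p1 - int n1 = d1"
    "pospart d2 = enat p2" "negpart d2 = enat n2" "int p2 - int n2 = d2"
    "pospart d3 = enat p3" "negpart d3 = enat n3" "int p3 - int n3 = d3"
    "pospart d4 = enat p4" "negpart d4 = enat n4" "int p4 - int n4 = d4"
    by (metis pospart_negpart_split)
  with assms show ?thesis by simp
qed

lemma ring_neighbours:
  fixes p q s r :: nat
  assumes "p < 4" "q = (p + 1) mod 4" "s = (q + 1) mod 4" "r = (s + 1) mod 4"
  shows "q < 4" "s < 4" "r < 4" "(r + 1) mod 4 = p" "distinct [p, q, s, r]"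
proof -
  show "q < 4" "s < 4" "r < 4" "(r + 1) mod 4 = p"
    using assms by presburger+
  have "p \<noteq> q" "p \<noteq> s" "p \<noteq> r" "q \<noteq> s" "q \<noteq> r" "s \<noteq> r"
    using assms by presburger+
  then show "distinct [p, q, s, r]" by simp
qed

lemma sum_lessThan_4_distinct:
  fixes p q s r :: nat
  assumes "p < 4" "q < 4" "s < 4" "r < 4" "distinct [p, q, s, r]"
  shows "(\<Sum>k<4. d k) = d p + d q + d s + d r"
proof -
  have "card {p, q, s, r} = card {..<4::nat}" using assms(5) by simp
  then have "{p, q, s, r} = {..<4}"
    using assms(1-4) by (intro card_subset_eq) auto
  then have "(\<Sum>k<4. d k) = sum d {p, q, s, r}" by simp
  also have "\<dots> = d p + d q + d s + d r" using assms(5) by (simp add: add.assoc)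
  finally show ?thesis .
qed

lemma ring_readings_determine_finite_entry:
  assumes sum: "(\<Sum>k<4. d k) \<noteq> 0"
    and sx: "finite_support_count 4 x \<le> 2" and sy: "finite_support_count 4 y \<le> 2"
    and eq: "\<And>k. k < 4 \<Longrightarrow> ring_reading d x k = ring_reading d y k"
    and p: "p < 4" and fin: "x p \<noteq> \<infinity>"
  shows "x p = y p"
proof (rule ccontr)
  assume ne: "x p \<noteq> y p"
  define q s r where "q = (p + 1) mod 4" and "s = (q + 1) mod 4" and "r = (s + 1) mod 4"
  note ring = ring_neighbours[OF p q_def s_def r_def]
  have idx: "q < 4" "s < 4" "r < 4" "(r + 1) mod 4 = p"
    and dist: "p \<noteq> q" "p \<noteq> s" "p \<noteq> r" "q \<noteq> s" "q \<noteq> r" "s \<noteq> r"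
    using ring by auto
  have eq_p: "ring_reading d x p = ring_reading d y p"
    and eq_q: "ring_reading d x q = ring_reading d y q"
    and eq_s: "ring_reading d x s = ring_reading d y s"
    and eq_r: "ring_reading d x r = ring_reading d y r"
    using eq p idx by auto
  have q_seen: "x q \<noteq> \<infinity> \<or> y q \<noteq> \<infinity>"
    using ring_reading_cancel_left[OF eq_p] ne q_def by auto
  have r_seen: "x r \<noteq> \<infinity> \<or> y r \<noteq> \<infinity>"
    using ring_reading_cancel_right[OF eq_r] ne idx(4) by auto
  have x_q: "x q = \<infinity>"
  proof (rule ccontr)
    assume "x q \<noteq> \<infinity>"
    then have "x s = \<infinity>" "x r = \<infinity>"
      using fin infinity_among_three[OF sx] p idx dist by metis+
    then have "y r = \<infinity>"
      using eq_s ring_reading_eq_infinity_iff r_def by metis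
    with \<open>x r = \<infinity>\<close> r_seen show False by simp
  qed
  have x_r: "x r = \<infinity>"
  proof (rule ccontr)
    assume "x r \<noteq> \<infinity>"
    then have "x s = \<infinity>"
      using fin infinity_among_three[OF sx] p idx dist by metis
    then have "y q = \<infinity>"
      using eq_q x_q ring_reading_eq_infinity_iff s_def by metis
    with x_q q_seen show False by simp
  qed
  from q_seen r_seen x_q x_r have y_q: "y q \<noteq> \<infinity>" and y_r: "y r \<noteq> \<infinity>" by auto
  then have y_p: "y p = \<infinity>" and y_s: "y s = \<infinity>"
    using infinity_among_three[OF sy] p idx dist by metis+
  have x_s: "x s \<noteq> \<infinity>"
    using eq_q y_q x_q ring_reading_eq_infinity_iff s_def by metis
  obtain u v w z where "x p = enat u" "y q = enat v" "x s = enat w" "y r = enat z"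
    using fin y_q x_s y_r by auto
  have reading: "ring_reading d t p = min (pospart (d p) + t p) (negpart (d q) + t q)"
    "ring_reading d t q = min (pospart (d q) + t q) (negpart (d s) + t s)"
    "ring_reading d t s = min (pospart (d s) + t s) (negpart (d r) + t r)"
    "ring_reading d t r = min (pospart (d r) + t r) (negpart (d p) + t p)" for t
    unfolding ring_reading_def q_def[symmetric] s_def[symmetric] r_def[symmetric] idx(4) by simp_all
  with eq_p eq_q eq_s eq_r x_q x_r y_p y_s \<open>x p = enat u\<close> \<open>y q = enat v\<close> \<open>x s = enat w\<close> \<open>y r = enat z\<close>
  have "pospart (d p) + enat u = negpart (d q) + enat v"
    "pospart (d q) + enat v = negpart (d s) + enat w"
    "pospart (d s) + enat w = negpart (d r) + enat z"
    "pospart (d r) + enat z = negpart (d p) + enat u"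
    by simp_all
  then have "d p + d q + d s + d r = 0" by (rule alternating_readings_sum_eq_0)
  with sum sum_lessThan_4_distinct[OF p ring(1-3,5), of d] show False by simp
qed

lemma ring_readings_injective:
  assumes "(\<Sum>k<4. d k) \<noteq> 0"
    and "finite_support_count 4 x \<le> 2" "finite_support_count 4 y \<le> 2"
    and "\<And>k. k < 4 \<Longrightarrow> ring_reading d x k = ring_reading d y k"
    and "j < 4"
  shows "x j = y j"
proof -
  have "ring_reading d y k = ring_reading d x k" if "k < 4" for k
    using assms(4)[OF that] by simp
  then have "y j \<noteq> \<infinity> \<Longrightarrow> y j = x j"
    using ring_readings_determine_finite_entry[OF assms(1,3,2)] assms(5) by blast
  moreover have "x j \<noteq> \<infinity> \<Longrightarrow> x j = y j"
    using ring_readings_determine_finite_entry[OF assms(1-4)] assms(5) by blast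
  ultimately show ?thesis by fastforce
qed

lemma within_delay_sched:
  "within_delay 4 4 (nat (max (max \<bar>dW\<bar> \<bar>dX\<bar>) (max \<bar>dY\<bar> \<bar>dZ\<bar>))) (sched dW dX dY dZ)"
proof -
  define l where "l = nat (max (max \<bar>dW\<bar> \<bar>dX\<bar>) (max \<bar>dY\<bar> \<bar>dZ\<bar>))"
  have "pospart d \<le> enat l \<and> negpart d \<le> enat l" if "d \<in> {dW, dX, dY, dZ}" for d
    using that unfolding pospart_def negpart_def l_def by (auto intro!: nat_mono)
  then have "sched dW dX dY dZ t j = \<infinity> \<or> sched dW dX dY dZ t j \<le> enat l" for t j
    unfolding sched_def by simp
  then show ?thesis unfolding within_delay_def l_def by blast
qed

theorem mainTheorem4:
  fixes dW dX dY dZ :: int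
  assumes "dW + dX + dY + dZ \<noteq> 0"
  shows "tropical_code 4 4 2 (sched dW dX dY dZ) \<and>
         within_delay 4 4 (nat (max (max \<bar>dW\<bar> \<bar>dX\<bar>) (max \<bar>dY\<bar> \<bar>dZ\<bar>))) (sched dW dX dY dZ)"
proof
  let ?d = "nth [dW, dX, dY, dZ]"
  have sum: "(\<Sum>k<4. ?d k) \<noteq> 0"
    using assms by (simp add: eval_nat_numeral add.assoc)
  have coeffs: "?d 0 = dW" "?d 1 = dX" "?d 2 = dY" "?d 3 = dZ"
    by (simp_all add: numeral_eq_Suc)
  show "tropical_code 4 4 2 (sched dW dX dY dZ)"
    unfolding tropical_code_def
  proof (intro allI impI)
    fix x y :: "nat \<Rightarrow> enat"
    assume sx: "finite_support_count 4 x \<le> 2" and sy: "finite_support_count 4 y \<le> 2"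
      and "\<exists>j<4. x j \<noteq> y j"
    then have "\<exists>t<4. ring_reading ?d x t \<noteq> ring_reading ?d y t"
      using ring_readings_injective[OF sum sx sy] by blast
    then show "\<exists>t<4. trop_mv 4 (sched dW dX dY dZ) x t \<noteq> trop_mv 4 (sched dW dX dY dZ) y t"
      using trop_mv_sched[OF coeffs] by auto
  qed
qed (rule within_delay_sched)

end
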